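(* Let $U$ be a unitary on $\mathcal H=\mathcal H_A\otimes\mathcal H_V$ with an orthonormal eigenbasis $|\phi_i\rangle$, $U|\phi_i\rangle=\lambda_i|\phi_i\rangle$. For every unit vector $|\beta_0\rangle=\sum_ia_i|\phi_i\rangle$ and every positive integer $T$, \[\|\bar P_T(\cdot|\beta_0)-\pi(\cdot|\beta_0)\|\le 2\sum_{i,j:\ \lambda_i\ne\lambda_j}\frac{|a_i|^2}{T\,|\lambda_i-\lambda_j|}.\]
   Context: $\mathcal H_V$ has orthonormal basis $\{|v\rangle:v\in V\}$ ($V$ finite), $\mathcal H_A$ has basis $|1\rangle,\dots,|d\rangle$. $P_t(v|\beta_0)=\sum_a|\langle a,v|U^t\beta_0\rangle|^2$, $\bar P_T(v|\beta_0)=\frac1T\sum_{t=0}^{T-1}P_t(v|\beta_0)$, $\pi(v|\beta_0)=\lim_{T\to\infty}\bar P_T(v|\beta_0)$. Total variation distance $\|d_1-d_2\|=\sum_{v\in V}|d_1(v)-d_2(v)|$. *)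

theory Defs
  imports "HOL-Analysis.Analysis"
begin

text \<open>Hilbert space H = H_A (x) H_V, modelled as complex vectors indexed by
  coin states 'd (finite, d = CARD('d)) times vertices 'v (finite V).
  The basis vector |a,v> is the coordinate (a,v).\<close>

definition cinner :: "complex ^ 'n \<Rightarrow> complex ^ 'n \<Rightarrow> complex" where
  "cinner x y = (\<Sum>k\<in>UNIV. cnj (x $ k) * y $ k)"

definition adjoint_mat :: "complex ^ 'n ^ 'm \<Rightarrow> complex ^ 'm ^ 'n" where
  "adjoint_mat A = (\<chi> i j. cnj (A $ j $ i))"

definition unitary_mat :: "complex ^ 'n ^ 'n \<Rightarrow> bool" where
  "unitary_mat U \<longleftrightarrow> U ** adjoint_mat U = mat 1 \<and> adjoint_mat U ** U = mat 1"

definition Pt :: "complex ^ ('d::finite \<times> 'v::finite) ^ ('d \<times> 'v) \<Rightarrow> nat \<Rightarrow> complex ^ ('d \<times> 'v) \<Rightarrow> 'v \<Rightarrow> real" where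
  "Pt U t \<beta>0 v = (\<Sum>a\<in>(UNIV::'d set). (cmod ((((\<lambda>x. U *v x) ^^ t) \<beta>0) $ (a, v)))\<^sup>2)"

definition PbarT :: "complex ^ ('d::finite \<times> 'v::finite) ^ ('d \<times> 'v) \<Rightarrow> nat \<Rightarrow> complex ^ ('d \<times> 'v) \<Rightarrow> 'v \<Rightarrow> real" where
  "PbarT U T \<beta>0 v = (1 / real T) * (\<Sum>t<T. Pt U t \<beta>0 v)"

definition limdist :: "complex ^ ('d::finite \<times> 'v::finite) ^ ('d \<times> 'v) \<Rightarrow> complex ^ ('d \<times> 'v) \<Rightarrow> 'v \<Rightarrow> real" where
  "limdist U \<beta>0 v = lim (\<lambda>T. PbarT U T \<beta>0 v)"

definition tv_dist :: "('v::finite \<Rightarrow> real) \<Rightarrow> ('v \<Rightarrow> real) \<Rightarrow> real" where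
  "tv_dist d1 d2 = (\<Sum>v\<in>UNIV. \<bar>d1 v - d2 v\<bar>)"

end

theory Submission
  imports Defs
begin

(* In the eigenbasis U^t beta0 = sum_i a_i lam_i^t phi_i, so P_t(v) is a finite sum over pairs (i, j)
   of coherences c_ij(v) = a_i conj(a_j) sum_b phi_i(b,v) conj(phi_j(b,v)) times phases
   (lam_i conj(lam_j))^t. Averaging over t < T replaces each phase by a geometric mean, which is 1
   when lam_i = lam_j and otherwise has modulus at most 2 / (T |lam_i - lam_j|), hence tends to 0;
   so pi retains exactly the terms with lam_i = lam_j. Cauchy-Schwarz gives
   sum_v |c_ij(v)| <= |a_i| |a_j|, and since |lam_i - lam_j| is symmetric in i and j, the product
   |a_i| |a_j| may be replaced by |a_i|^2. *)

lemma cinner_self_eq_norm_power2: "cinner x x = complex_of_real ((norm x)\<^sup>2)"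
proof -
  have "cnj (x $ k) * x $ k = complex_of_real ((cmod (x $ k))\<^sup>2)" for k
    by (metis complex_norm_square mult.commute)
  then show ?thesis
    unfolding cinner_def norm_vec_def L2_set_def by (simp add: sum_nonneg of_real_sum)
qed

lemma cinner_self_eq_1_iff: "cinner x x = 1 \<longleftrightarrow> norm x = 1"
proof -
  have "cinner x x = 1 \<longleftrightarrow> (norm x)\<^sup>2 = 1"
    by (metis cinner_self_eq_norm_power2 of_real_eq_1_iff)
  also have "\<dots> \<longleftrightarrow> norm x = 1"
    by (metis norm_ge_zero one_power2 power2_eq_iff_nonneg zero_le_one)
  finally show ?thesis .
qed

lemma cinner_matrix_vector_adjoint:
  fixes A :: "complex ^ 'n ^ 'm"
  shows "cinner (A *v x) y = cinner x (adjoint_mat A *v y)"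
proof -
  have "cinner (A *v x) y = (\<Sum>k\<in>UNIV. \<Sum>l\<in>UNIV. cnj (A $ k $ l) * cnj (x $ l) * y $ k)"
    unfolding cinner_def matrix_vector_mult_def by (simp add: sum_distrib_right)
  also have "\<dots> = (\<Sum>l\<in>UNIV. \<Sum>k\<in>UNIV. cnj (A $ k $ l) * cnj (x $ l) * y $ k)"
    by (rule sum.swap)
  also have "\<dots> = cinner x (adjoint_mat A *v y)"
    unfolding cinner_def adjoint_mat_def matrix_vector_mult_def
    by (simp add: sum_distrib_left mult_ac)
  finally show ?thesis .
qed

lemma cinner_scalar_mult: "cinner (c *s x) (d *s y) = cnj c * d * cinner x y"
  unfolding cinner_def by (simp add: sum_distrib_left mult_ac)

lemma unitary_eigenvalue_norm:
  assumes "unitary_mat U" and "U *v x = l *s x" and "x \<noteq> 0"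
  shows "cmod l = 1"
proof -
  have "cinner x x = cinner (U *v x) (U *v x)"
    using assms(1) by (simp add: cinner_matrix_vector_adjoint matrix_vector_mul_assoc unitary_mat_def)
  also have "\<dots> = cnj l * l * cinner x x"
    using assms(2) by (simp add: cinner_scalar_mult)
  finally have "cnj l * l = 1"
    using assms(3) by (simp add: cinner_self_eq_norm_power2)
  then have "(cmod l)\<^sup>2 = 1"
    by (metis complex_norm_square mult.commute of_real_eq_1_iff)
  then show ?thesis
    using norm_ge_zero[of l] by (auto simp: power2_eq_1_iff)
qed

definition power_average :: "nat \<Rightarrow> 'a::real_normed_field \<Rightarrow> 'a" where
  "power_average T z = (\<Sum>t<T. z ^ t) / of_nat T"

lemma power_average_1: "T \<ge> 1 \<Longrightarrow> power_average T 1 = 1"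
  by (simp add: power_average_def)

lemma norm_power_average_le:
  fixes z :: "'a::real_normed_field"
  assumes "norm z \<le> 1" and "z \<noteq> 1"
  shows "norm (power_average T z) \<le> 2 / (real T * norm (z - 1))"
proof -
  have "norm (1 - z ^ T) \<le> 2"
    using norm_triangle_ineq4[of 1 "z ^ T"] power_le_one[OF norm_ge_zero assms(1), of T]
    by (simp add: norm_power)
  then have "norm (1 - z ^ T) / (real T * norm (1 - z)) \<le> 2 / (real T * norm (1 - z))"
    by (simp add: divide_right_mono)
  then show ?thesis
    using assms(2)
    by (simp add: power_average_def sum_gp_strict norm_divide norm_mult norm_minus_commute mult.commute)
qed

lemma power_average_tendsto:
  fixes z :: "'a::real_normed_field"
  assumes "norm z \<le> 1"
  shows "(\<lambda>T. power_average T z) \<longlonglongrightarrow> (if z = 1 then 1 else 0)"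
proof (cases "z = 1")
  case True
  have "\<forall>\<^sub>F T in sequentially. power_average T z = 1"
    using eventually_ge_at_top[of 1] by eventually_elim (simp add: True power_average_1)
  then show ?thesis
    using True tendsto_eventually by auto
next
  case False
  have "(\<lambda>T. (2 / norm (z - 1)) / real T) \<longlonglongrightarrow> 0"
    by (rule lim_const_over_n)
  then have "(\<lambda>T. power_average T z) \<longlonglongrightarrow> 0"
    by (rule Lim_null_comparison[rotated])
       (use norm_power_average_le[OF assms False] in \<open>simp add: mult.commute\<close>)
  then show ?thesis
    using False by simp
qed

lemma sum_symmetric_mult_le_sum_power2:
  fixes c :: "'a \<Rightarrow> 'a \<Rightarrow> real" and g :: "'a \<Rightarrow> real"
  assumes "\<And>i j. (i, j) \<in> N \<Longrightarrow> (j, i) \<in> N"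
    and "\<And>i j. c j i = c i j"
    and "\<And>i j. (i, j) \<in> N \<Longrightarrow> c i j \<ge> 0"
  shows "(\<Sum>(i, j)\<in>N. c i j * (g i * g j)) \<le> (\<Sum>(i, j)\<in>N. c i j * (g i)\<^sup>2)"
proof -
  have swap: "(\<Sum>(i, j)\<in>N. c i j * (g j)\<^sup>2) = (\<Sum>(i, j)\<in>N. c i j * (g i)\<^sup>2)"
    by (rule sum.reindex_bij_witness[of _ prod.swap prod.swap]) (auto simp: assms(1,2))
  have "(\<Sum>(i, j)\<in>N. c i j * (g i * g j)) \<le> (\<Sum>(i, j)\<in>N. c i j * (((g i)\<^sup>2 + (g j)\<^sup>2) / 2))"
  proof (intro sum_mono, clarify)
    fix i j
    assume "(i, j) \<in> N"
    have "g i * g j \<le> ((g i)\<^sup>2 + (g j)\<^sup>2) / 2"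
      using sum_squares_bound[of "g i" "g j"] by simp
    then show "c i j * (g i * g j) \<le> c i j * (((g i)\<^sup>2 + (g j)\<^sup>2) / 2)"
      using assms(3)[OF \<open>(i, j) \<in> N\<close>] by (rule mult_left_mono)
  qed
  also have "\<dots> = ((\<Sum>(i, j)\<in>N. c i j * (g i)\<^sup>2) + (\<Sum>(i, j)\<in>N. c i j * (g j)\<^sup>2)) / 2"
    by (simp add: sum.distrib sum_divide_distrib distrib_left add_divide_distrib split_def)
  finally show ?thesis
    by (simp add: swap)
qed

locale unimodular_eigenexpansion =
  fixes U :: "complex ^ ('d::finite \<times> 'v::finite) ^ ('d \<times> 'v)"
    and \<phi> :: "'i::finite \<Rightarrow> complex ^ ('d \<times> 'v)"
    and lam :: "'i \<Rightarrow> complex"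
    and a :: "'i \<Rightarrow> complex"
    and \<beta>0 :: "complex ^ ('d \<times> 'v)"
  assumes norm_eigenvector: "\<And>i. norm (\<phi> i) = 1"
    and norm_eigenvalue: "\<And>i. cmod (lam i) = 1"
    and eigen: "\<And>i. U *v \<phi> i = lam i *s \<phi> i"
    and expansion: "\<beta>0 = (\<Sum>i\<in>UNIV. a i *s \<phi> i)"
begin

definition phase :: "'i \<Rightarrow> 'i \<Rightarrow> complex" where
  "phase i j = lam i * cnj (lam j)"

definition coherence :: "'i \<Rightarrow> 'i \<Rightarrow> 'v \<Rightarrow> complex" where
  "coherence i j v = (\<Sum>b\<in>UNIV. a i * \<phi> i $ (b, v) * cnj (a j * \<phi> j $ (b, v)))"

lemma norm_phase: "cmod (phase i j) = 1"
  by (simp add: phase_def norm_mult norm_eigenvalue)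

lemma norm_phase_minus_1: "cmod (phase i j - 1) = cmod (lam i - lam j)"
proof -
  have "lam j * cnj (lam j) = 1"
    using complex_norm_square[of "lam j"] by (simp add: norm_eigenvalue)
  then have "phase i j - 1 = cnj (lam j) * (lam i - lam j)"
    by (simp add: phase_def algebra_simps)
  then show ?thesis
    by (simp add: norm_mult norm_eigenvalue)
qed

lemma phase_eq_1_iff: "phase i j = 1 \<longleftrightarrow> lam i = lam j"
  using norm_phase_minus_1[of i j] by auto

lemma walk_power_expansion:
  "((\<lambda>x. U *v x) ^^ t) \<beta>0 = (\<Sum>i\<in>UNIV. (a i * lam i ^ t) *s \<phi> i)"
proof (induction t)
  case 0
  show ?case by (simp add: expansion)
next
  case (Suc t)
  then show ?case
    by (simp add: vec.linear_sum vec.linear_scale eigen vector_smult_assoc mult_ac)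
qed

lemma Pt_expansion:
  "complex_of_real (Pt U t \<beta>0 v) = (\<Sum>(i, j)\<in>UNIV. coherence i j v * phase i j ^ t)"
proof -
  let ?c = "\<lambda>b i. a i * lam i ^ t * \<phi> i $ (b, v)"
  have "complex_of_real (Pt U t \<beta>0 v) = (\<Sum>b\<in>UNIV. (\<Sum>i\<in>UNIV. ?c b i) * cnj (\<Sum>j\<in>UNIV. ?c b j))"
    unfolding Pt_def walk_power_expansion of_real_sum complex_norm_square by simp
  also have "\<dots> = (\<Sum>b\<in>UNIV. \<Sum>(i, j)\<in>UNIV. ?c b i * cnj (?c b j))"
    by (simp add: sum_product sum.cartesian_product)
  also have "\<dots> = (\<Sum>(i, j)\<in>UNIV. coherence i j v * phase i j ^ t)"
    by (subst sum.swap)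
       (simp add: coherence_def phase_def split_def sum_distrib_left power_mult_distrib mult_ac)
  finally show ?thesis .
qed

lemma PbarT_expansion:
  "complex_of_real (PbarT U T \<beta>0 v)
     = (\<Sum>(i, j)\<in>UNIV. coherence i j v * power_average T (phase i j))"
  unfolding PbarT_def power_average_def
  by (simp add: Pt_expansion sum.swap[of _ "{..<T}"] sum_distrib_left sum_divide_distrib
      split_def mult_ac)

lemma limdist_eq: "limdist U \<beta>0 v = Re (\<Sum>(i, j)\<in>{(i, j). lam i = lam j}. coherence i j v)"
proof -
  have "(\<lambda>T. complex_of_real (PbarT U T \<beta>0 v))
      \<longlonglongrightarrow> (\<Sum>(i, j)\<in>UNIV. coherence i j v * (if phase i j = 1 then 1 else 0))"
    unfolding PbarT_expansion split_def
    by (intro tendsto_sum tendsto_mult tendsto_const power_average_tendsto) (simp add: norm_phase)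
  also have "(\<Sum>(i, j)\<in>UNIV. coherence i j v * (if phase i j = 1 then 1 else 0))
      = (\<Sum>(i, j)\<in>{(i, j). lam i = lam j}. coherence i j v)"
    by (simp add: phase_eq_1_iff split_def if_distrib sum.inter_filter[symmetric] cong: if_cong)
  finally have "(\<lambda>T. Re (complex_of_real (PbarT U T \<beta>0 v)))
      \<longlonglongrightarrow> Re (\<Sum>(i, j)\<in>{(i, j). lam i = lam j}. coherence i j v)"
    by (rule tendsto_Re)
  then show ?thesis
    unfolding limdist_def by (simp add: limI)
qed

lemma PbarT_minus_limdist:
  assumes "T \<ge> 1"
  shows "PbarT U T \<beta>0 v - limdist U \<beta>0 v
    = Re (\<Sum>(i, j)\<in>{(i, j). lam i \<noteq> lam j}. coherence i j v * power_average T (phase i j))"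
proof -
  let ?D = "{(i, j). lam i = lam j}" and ?N = "{(i, j). lam i \<noteq> lam j}"
  let ?f = "\<lambda>(i, j). coherence i j v * power_average T (phase i j)"
  have "?N = UNIV - ?D" by auto
  then have "complex_of_real (PbarT U T \<beta>0 v) = sum ?f ?D + sum ?f ?N"
    unfolding PbarT_expansion by (simp add: sum.Int_Diff[of UNIV _ ?D])
  moreover have "sum ?f ?D = (\<Sum>(i, j)\<in>?D. coherence i j v)"
    using assms by (intro sum.cong) (auto simp: power_average_1 dest: phase_eq_1_iff[THEN iffD2])
  ultimately have "PbarT U T \<beta>0 v = Re (\<Sum>(i, j)\<in>?D. coherence i j v) + Re (sum ?f ?N)"
    by (metis Re_complex_of_real plus_complex.sel(1))
  then show ?thesis
    by (simp add: limdist_eq)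
qed

lemma sum_norm_coherence_le: "(\<Sum>v\<in>UNIV. cmod (coherence i j v)) \<le> cmod (a i) * cmod (a j)"
proof -
  have "(\<Sum>v\<in>UNIV. cmod (coherence i j v))
      \<le> (\<Sum>v\<in>UNIV. \<Sum>b\<in>UNIV.
            cmod (a i) * cmod (a j) * (cmod (\<phi> i $ (b, v)) * cmod (\<phi> j $ (b, v))))"
    unfolding coherence_def by (intro sum_mono order_trans[OF norm_sum]) (simp add: norm_mult mult_ac)
  also have "\<dots> = cmod (a i) * cmod (a j) * (\<Sum>k\<in>UNIV. cmod (\<phi> i $ k) * cmod (\<phi> j $ k))"
  proof -
    have "(\<Sum>v\<in>UNIV. \<Sum>b\<in>UNIV. h (b, v)) = (\<Sum>k\<in>UNIV. h k)" for h :: "'d \<times> 'v \<Rightarrow> real"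
      by (subst sum.swap) (simp add: sum.cartesian_product)
    from this[of "\<lambda>k. cmod (a i) * cmod (a j) * (cmod (\<phi> i $ k) * cmod (\<phi> j $ k))"]
    show ?thesis
      by (simp add: sum_distrib_left)
  qed
  also have "\<dots> \<le> cmod (a i) * cmod (a j) * (norm (\<phi> i) * norm (\<phi> j))"
    using L2_set_mult_ineq[of "\<lambda>k. cmod (\<phi> i $ k)" "\<lambda>k. cmod (\<phi> j $ k)" UNIV]
    by (intro mult_left_mono) (simp_all add: norm_vec_def)
  finally show ?thesis
    by (simp add: norm_eigenvector)
qed

lemma norm_power_average_phase_le:
  assumes "lam i \<noteq> lam j"
  shows "cmod (power_average T (phase i j)) \<le> 2 / (real T * cmod (lam i - lam j))"
  using norm_power_average_le[of "phase i j" T] assms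
  by (simp add: norm_phase phase_eq_1_iff norm_phase_minus_1)

lemma tv_dist_PbarT_limdist_le:
  assumes "T \<ge> 1"
  shows "tv_dist (PbarT U T \<beta>0) (limdist U \<beta>0)
    \<le> (\<Sum>(i, j)\<in>{(i, j). lam i \<noteq> lam j}.
          2 / (real T * cmod (lam i - lam j)) * (cmod (a i) * cmod (a j)))"
proof -
  let ?N = "{(i, j). lam i \<noteq> lam j}"
  define c where "c i j = 2 / (real T * cmod (lam i - lam j))" for i j
  have c_nonneg: "c i j \<ge> 0" for i j
    by (simp add: c_def)
  have "tv_dist (PbarT U T \<beta>0) (limdist U \<beta>0)
      = (\<Sum>v\<in>UNIV. \<bar>Re (\<Sum>(i, j)\<in>?N. coherence i j v * power_average T (phase i j))\<bar>)"
    by (simp add: tv_dist_def PbarT_minus_limdist[OF assms])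
  also have "\<dots> \<le> (\<Sum>v\<in>UNIV. \<Sum>(i, j)\<in>?N. c i j * cmod (coherence i j v))"
  proof -
    have "cmod (coherence i j v * power_average T (phase i j)) \<le> c i j * cmod (coherence i j v)"
      if "lam i \<noteq> lam j" for i j v
    proof -
      have "cmod (power_average T (phase i j)) \<le> c i j"
        unfolding c_def by (rule norm_power_average_phase_le[OF that])
      from mult_left_mono[OF this norm_ge_zero[of "coherence i j v"]] show ?thesis
        by (simp add: norm_mult mult.commute)
    qed
    then show ?thesis
      by (intro sum_mono order_trans[OF abs_Re_le_cmod] order_trans[OF norm_sum]) auto
  qed
  also have "\<dots> = (\<Sum>(i, j)\<in>?N. c i j * (\<Sum>v\<in>UNIV. cmod (coherence i j v)))"
    by (subst sum.swap) (simp add: sum_distrib_left split_def)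
  also have "\<dots> \<le> (\<Sum>(i, j)\<in>?N. c i j * (cmod (a i) * cmod (a j)))"
    by (intro sum_mono) (auto intro!: mult_left_mono sum_norm_coherence_le c_nonneg)
  finally show ?thesis
    unfolding c_def .
qed

end

theorem mainTheorem8:
  fixes U :: "complex ^ ('d::finite \<times> 'v::finite) ^ ('d \<times> 'v)"
    and \<phi> :: "'d \<times> 'v \<Rightarrow> complex ^ ('d \<times> 'v)"
    and lam :: "'d \<times> 'v \<Rightarrow> complex"
    and a :: "'d \<times> 'v \<Rightarrow> complex"
    and \<beta>0 :: "complex ^ ('d \<times> 'v)"
    and T :: nat
  assumes "unitary_mat U"
    and "\<And>i j. cinner (\<phi> i) (\<phi> j) = (if i = j then 1 else 0)"
    and "\<And>i. U *v \<phi> i = lam i *s \<phi> i"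
    and "\<beta>0 = (\<Sum>i\<in>UNIV. a i *s \<phi> i)"
    and "cinner \<beta>0 \<beta>0 = 1"
    and "T \<ge> 1"
  shows "tv_dist (PbarT U T \<beta>0) (limdist U \<beta>0)
         \<le> 2 * (\<Sum>(i, j) \<in> {(i, j). lam i \<noteq> lam j}.
                  (cmod (a i))\<^sup>2 / (real T * cmod (lam i - lam j)))"
proof -
  have norm_\<phi>: "norm (\<phi> i) = 1" for i
    using assms(2)[of i i] by (simp add: cinner_self_eq_1_iff)
  interpret unimodular_eigenexpansion U \<phi> lam a \<beta>0
  proof
    show "norm (\<phi> i) = 1" for i
      by (fact norm_\<phi>)
    show "cmod (lam i) = 1" for i
      by (rule unitary_eigenvalue_norm[OF assms(1,3)]) (use norm_\<phi>[of i] in auto)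
  qed (fact assms(3,4))+
  let ?N = "{(i, j). lam i \<noteq> lam j}"
  have "tv_dist (PbarT U T \<beta>0) (limdist U \<beta>0)
      \<le> (\<Sum>(i, j)\<in>?N. 2 / (real T * cmod (lam i - lam j)) * (cmod (a i) * cmod (a j)))"
    by (rule tv_dist_PbarT_limdist_le[OF assms(6)])
  also have "\<dots> \<le> (\<Sum>(i, j)\<in>?N. 2 / (real T * cmod (lam i - lam j)) * (cmod (a i))\<^sup>2)"
    by (rule sum_symmetric_mult_le_sum_power2) (auto simp: norm_minus_commute)
  also have "\<dots> = 2 * (\<Sum>(i, j)\<in>?N. (cmod (a i))\<^sup>2 / (real T * cmod (lam i - lam j)))"
    by (simp add: sum_distrib_left split_def)
  finally show ?thesis .
qed

end
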